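(* Let $\mathbb{Z} = \langle g\rangle$ act freely and cospecially on a CAT(0) cube complex $X$ by combinatorial isometries. For every vertices $x,y\in \mathrm{Min}(g)$, there exists a unique bijection between $\mathrm{Sep}(x\mid gx)$ and $\mathrm{Sep}(y\mid gy)$ which maps each hyperplane to a hyperplane in the same $\langle g\rangle$-orbit.
   Context: $\mathrm{Sep}(A\mid B)$ denotes the set of hyperplanes separating $A$ from $B$. $\mathrm{Min}(g)$ is the subcomplex spanned by the vertices $x$ minimizing the combinatorial distance $d(x,gx)$. An action is cospecial if the quotient cube complex is special in the sense of Haglund–Wise. *)

theory Defs
  imports Main "HOL-Library.FuncSet"
begin

text \<open>A CAT(0) cube complex is encoded by its 1-skeleton, a median graph
  (Chepoi / Roller / Gerasimov). Vertex set V, adjacency E.\<close>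

definition walk :: "('v \<Rightarrow> 'v \<Rightarrow> bool) \<Rightarrow> 'v list \<Rightarrow> bool" where
  "walk E xs \<longleftrightarrow> xs \<noteq> [] \<and> (\<forall>i. Suc i < length xs \<longrightarrow> E (xs ! i) (xs ! Suc i))"

definition gdist :: "('v \<Rightarrow> 'v \<Rightarrow> bool) \<Rightarrow> 'v \<Rightarrow> 'v \<Rightarrow> nat" where
  "gdist E x y = (LEAST n. \<exists>xs. walk E xs \<and> hd xs = x \<and> last xs = y \<and> length xs = Suc n)"

definition median_graph :: "'v set \<Rightarrow> ('v \<Rightarrow> 'v \<Rightarrow> bool) \<Rightarrow> bool" where
  "median_graph V E \<longleftrightarrow>
     (\<forall>a b. E a b \<longrightarrow> a \<in> V \<and> b \<in> V) \<and>
     (\<forall>a b. E a b \<longrightarrow> E b a) \<and>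
     (\<forall>a. \<not> E a a) \<and>
     (\<forall>x\<in>V. \<forall>y\<in>V. \<exists>xs. walk E xs \<and> hd xs = x \<and> last xs = y) \<and>
     (\<forall>x\<in>V. \<forall>y\<in>V. \<forall>z\<in>V. \<exists>!m. m \<in> V \<and>
        gdist E x m + gdist E m y = gdist E x y \<and>
        gdist E y m + gdist E m z = gdist E y z \<and>
        gdist E x m + gdist E m z = gdist E x z)"

definition halfspace :: "'v set \<Rightarrow> ('v \<Rightarrow> 'v \<Rightarrow> bool) \<Rightarrow> 'v \<Rightarrow> 'v \<Rightarrow> 'v set" where
  "halfspace V E a b = {x \<in> V. gdist E x a < gdist E x b}"

definition dual_hyp :: "'v set \<Rightarrow> ('v \<Rightarrow> 'v \<Rightarrow> bool) \<Rightarrow> 'v \<Rightarrow> 'v \<Rightarrow> 'v set set" where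
  "dual_hyp V E a b = {halfspace V E a b, halfspace V E b a}"

definition hyperplanes :: "'v set \<Rightarrow> ('v \<Rightarrow> 'v \<Rightarrow> bool) \<Rightarrow> 'v set set set" where
  "hyperplanes V E = {dual_hyp V E a b | a b. E a b}"

definition Sep :: "'v set \<Rightarrow> ('v \<Rightarrow> 'v \<Rightarrow> bool) \<Rightarrow> 'v \<Rightarrow> 'v \<Rightarrow> 'v set set set" where
  "Sep V E x y = {H \<in> hyperplanes V E. \<exists>A\<in>H. x \<in> A \<and> y \<notin> A}"

text \<open>Combinatorial isometry = automorphism of the 1-skeleton.\<close>
definition graph_aut :: "'v set \<Rightarrow> ('v \<Rightarrow> 'v \<Rightarrow> bool) \<Rightarrow> ('v \<Rightarrow> 'v) \<Rightarrow> bool" where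
  "graph_aut V E g \<longleftrightarrow> bij_betw g V V \<and> (\<forall>a\<in>V. \<forall>b\<in>V. E a b \<longleftrightarrow> E (g a) (g b))"

definition zpow :: "'v set \<Rightarrow> ('v \<Rightarrow> 'v) \<Rightarrow> int \<Rightarrow> 'v \<Rightarrow> 'v" where
  "zpow V g n = (if 0 \<le> n then g ^^ nat n else (inv_into V g) ^^ nat (- n))"

definition hyp_act :: "'v set \<Rightarrow> ('v \<Rightarrow> 'v) \<Rightarrow> int \<Rightarrow> 'v set set \<Rightarrow> 'v set set" where
  "hyp_act V g n H = (\<lambda>A. zpow V g n ` A) ` H"

text \<open>The action of Z = <g> is free (for a torsion-free group acting on a cube
  complex, freeness on vertices is equivalent to freeness).\<close>
definition free_Z_action :: "'v set \<Rightarrow> ('v \<Rightarrow> 'v) \<Rightarrow> bool" where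
  "free_Z_action V g \<longleftrightarrow> (\<forall>n::nat. n > 0 \<longrightarrow> (\<forall>x\<in>V. (g ^^ n) x \<noteq> x))"

definition hyp_cross :: "'v set set \<Rightarrow> 'v set set \<Rightarrow> bool" where
  "hyp_cross H1 H2 \<longleftrightarrow> H1 \<noteq> H2 \<and> (\<forall>A\<in>H1. \<forall>B\<in>H2. A \<inter> B \<noteq> {})"

definition no_square :: "'v set \<Rightarrow> ('v \<Rightarrow> 'v \<Rightarrow> bool) \<Rightarrow> 'v \<Rightarrow> 'v \<Rightarrow> 'v \<Rightarrow> bool" where
  "no_square V E v a b \<longleftrightarrow> \<not> (\<exists>c\<in>V. c \<noteq> v \<and> E a c \<and> E b c)"

text \<open>Haglund--Wise specialness of the quotient X / <g>, expressed on X: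
  no one-sided, self-intersecting, directly self-osculating or
  inter-osculating hyperplanes in the quotient.\<close>
definition cospecial :: "'v set \<Rightarrow> ('v \<Rightarrow> 'v \<Rightarrow> bool) \<Rightarrow> ('v \<Rightarrow> 'v) \<Rightarrow> bool" where
  "cospecial V E g \<longleftrightarrow>
     \<comment> \<open>two-sided\<close>
     (\<forall>H\<in>hyperplanes V E. \<forall>n. \<forall>A\<in>H. \<forall>B\<in>H. A \<noteq> B \<longrightarrow> zpow V g n ` A \<noteq> B) \<and>
     \<comment> \<open>no self-intersection\<close>
     (\<forall>H\<in>hyperplanes V E. \<forall>n. \<not> hyp_cross H (hyp_act V g n H)) \<and>
     \<comment> \<open>no direct self-osculation\<close>
     (\<forall>v a b n. E v a \<longrightarrow> E v b \<longrightarrow> a \<noteq> b \<longrightarrow> no_square V E v a b \<longrightarrow>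
        \<not> (hyp_act V g n (dual_hyp V E v a) = dual_hyp V E v b \<and>
           zpow V g n ` halfspace V E v a = halfspace V E v b)) \<and>
     \<comment> \<open>no inter-osculation\<close>
     (\<forall>v a b. E v a \<longrightarrow> E v b \<longrightarrow> a \<noteq> b \<longrightarrow> no_square V E v a b \<longrightarrow>
        (\<forall>n1. \<not> hyp_cross (dual_hyp V E v a) (hyp_act V g n1 (dual_hyp V E v b))))"

definition Min_set :: "'v set \<Rightarrow> ('v \<Rightarrow> 'v \<Rightarrow> bool) \<Rightarrow> ('v \<Rightarrow> 'v) \<Rightarrow> 'v set" where
  "Min_set V E g = {x \<in> V. \<forall>y\<in>V. gdist E x (g x) \<le> gdist E y (g y)}"

end

theory Submission
  imports Defs
begin

text \<open>
  Let x \<in> Min(g) and let P be a halfspace containing x but not gx. Minimality of d(x, gx)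
  and the median property give P \<union> gP = X as soon as x \<notin> gP; applied also to the
  complement of the preimage of P, two-sidedness excludes P \<union> gP = X, and then the absence of
  self-intersection forces P \<subset> gP. So the translates g^n P form a strictly increasing chain:
  g^n P separates x from gx only for n = 0, and since only finitely many hyperplanes separate
  two vertices, every vertex y is separated from gy by some translate of P. Hence, for x and y
  both in Min(g), every \<langle>g\<rangle>-orbit of hyperplanes meets Sep(x | gx) and Sep(y | gy) in
  exactly one hyperplane each.
\<close>

section \<open>Integer actions\<close>

lemma mono_int_family_boundary:
  fixes S :: "int \<Rightarrow> 'a set"
  assumes "mono S" "y \<in> S k1" "y \<notin> S k0"
  shows "\<exists>n. y \<in> S n \<and> y \<notin> S (n - 1)"
proof -
  have boundary: "\<exists>n. y \<in> S n \<and> y \<notin> S (n - 1)" if "y \<notin> S k" "y \<in> S (k + int j)" for k j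
    using that
  proof (induction j arbitrary: k)
    case (Suc j)
    show ?case
    proof (cases "y \<in> S (k + 1)")
      case True
      then show ?thesis using Suc.prems(1) by (intro exI[of _ "k + 1"]) simp
    next
      case False
      then show ?thesis using Suc.IH[of "k + 1"] Suc.prems(2) by (simp add: algebra_simps)
    qed
  qed simp
  have "\<not> k1 \<le> k0" using assms monoD by blast
  then show ?thesis using boundary[of k0 "nat (k1 - k0)"] assms(2,3) by simp
qed

lemma unique_orbit_bijection:
  fixes act :: "int \<Rightarrow> 'h \<Rightarrow> 'h"
  assumes act_0: "\<And>H. H \<in> X \<Longrightarrow> act 0 H = H"
    and act_add: "\<And>a b H. H \<in> X \<Longrightarrow> act a (act b H) = act (a + b) H"
    and "S \<subseteq> X" "T \<subseteq> X"
    and S_to_T: "\<And>H. H \<in> S \<Longrightarrow> \<exists>n. act n H \<in> T"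
    and T_to_S: "\<And>K. K \<in> T \<Longrightarrow> \<exists>n. act n K \<in> S"
    and S_rigid: "\<And>H n. H \<in> S \<Longrightarrow> act n H \<in> S \<Longrightarrow> act n H = H"
    and T_rigid: "\<And>K n. K \<in> T \<Longrightarrow> act n K \<in> T \<Longrightarrow> act n K = K"
  shows "\<exists>!f. f \<in> extensional S \<and> bij_betw f S T \<and> (\<forall>H\<in>S. \<exists>n. f H = act n H)"
proof -
  have act_inverse: "act (- n) (act n H) = H" if "H \<in> X" for H n
    using act_add[OF that] act_0[OF that] by simp
  have T_unique: "act m H = act n H"
    if "H \<in> S" "act m H \<in> T" "act n H \<in> T" for H m n
    using T_rigid[OF that(2), of "n - m"] act_add[of H "n - m" m] that \<open>S \<subseteq> X\<close> by auto
  define F where "F H = (if H \<in> S then (THE K. K \<in> T \<and> (\<exists>n. K = act n H)) else undefined)" for H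
  have F: "F H \<in> T \<and> (\<exists>n. F H = act n H)" if "H \<in> S" for H
  proof -
    have "\<exists>!K. K \<in> T \<and> (\<exists>n. K = act n H)"
      using S_to_T[OF that] T_unique[OF that] by blast
    then show ?thesis using theI'[of "\<lambda>K. K \<in> T \<and> (\<exists>n. K = act n H)"] that F_def by simp
  qed
  have F_unique: "K = F H" if "H \<in> S" "K \<in> T" "K = act n H" for H K n
    using F[OF that(1)] T_unique[OF that(1)] that by metis
  have "inj_on F S"
  proof (rule inj_onI)
    fix H1 H2 assume H: "H1 \<in> S" "H2 \<in> S" "F H1 = F H2"
    obtain n1 n2 where "F H1 = act n1 H1" "F H2 = act n2 H2" using F H by metis
    then have "H2 = act (n1 - n2) H1"
      using act_inverse[of H2 n2] act_add[of H1 "- n2" n1] H \<open>S \<subseteq> X\<close> by auto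
    then show "H1 = H2" using S_rigid H by metis
  qed
  moreover have "F ` S = T"
  proof
    show "F ` S \<subseteq> T" using F by blast
    show "T \<subseteq> F ` S"
    proof
      fix K assume K: "K \<in> T"
      then obtain n where H: "act n K \<in> S" using T_to_S by blast
      have "K = act (- n) (act n K)" using act_inverse[of K n] K \<open>T \<subseteq> X\<close> by auto
      then have "K = F (act n K)" using F_unique[OF H K] by blast
      then show "K \<in> F ` S" using H by blast
    qed
  qed
  moreover have "F \<in> extensional S" by (simp add: F_def extensional_def)
  moreover have "f = F"
    if f: "f \<in> extensional S" "bij_betw f S T" "\<forall>H\<in>S. \<exists>n. f H = act n H" for f
  proof
    fix H
    show "f H = F H"
    proof (cases "H \<in> S")
      case True
      then obtain n where "f H = act n H" using f(3) by blast
      then show ?thesis using F_unique[OF True] bij_betwE[OF f(2)] True by blast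
    next
      case False
      then show ?thesis using extensional_arb[OF f(1)] F_def by simp
    qed
  qed
  ultimately show ?thesis using F unfolding bij_betw_def by metis
qed

section \<open>Median graphs\<close>

lemma walk_iff_successively: "walk E xs \<longleftrightarrow> xs \<noteq> [] \<and> successively E xs"
  by (simp add: walk_def successively_conv_nth)

lemma graph_aut_edge_iff:
  "graph_aut V E h \<Longrightarrow> a \<in> V \<Longrightarrow> b \<in> V \<Longrightarrow> E (h a) (h b) \<longleftrightarrow> E a b"
  by (simp add: graph_aut_def)

lemma graph_aut_in_V: "graph_aut V E h \<Longrightarrow> x \<in> V \<Longrightarrow> h x \<in> V"
  unfolding graph_aut_def using bij_betwE by blast

lemma graph_aut_id: "graph_aut V E id"
  by (simp add: graph_aut_def)

lemma graph_aut_comp: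
  assumes "graph_aut V E h1" "graph_aut V E h2"
  shows "graph_aut V E (h1 \<circ> h2)"
  using assms bij_betw_trans graph_aut_in_V unfolding graph_aut_def comp_def by metis

lemma graph_aut_funpow: "graph_aut V E h \<Longrightarrow> graph_aut V E (h ^^ n)"
  by (induction n) (simp_all add: graph_aut_id graph_aut_comp)

lemma graph_aut_inv_into:
  assumes h: "graph_aut V E h"
  shows "graph_aut V E (inv_into V h)"
proof -
  have b: "bij_betw h V V" using h by (simp add: graph_aut_def)
  have "E (inv_into V h a) (inv_into V h b) \<longleftrightarrow> E a b" if "a \<in> V" "b \<in> V" for a b
    using graph_aut_edge_iff[OF h, of "inv_into V h a" "inv_into V h b"] that
      bij_betw_inv_into[OF b] bij_betwE bij_betw_inv_into_right[OF b] by metis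
  then show ?thesis
    using bij_betw_inv_into[OF b] by (simp add: graph_aut_def)
qed

lemma graph_aut_image_diff:
  assumes "graph_aut V E h" "A \<subseteq> V"
  shows "h ` (V - A) = V - h ` A"
proof -
  have "inj_on h V" "h ` V = V" using assms(1) by (auto simp: graph_aut_def bij_betw_def)
  then show ?thesis using inj_on_image_set_diff[of h V V A] assms(2) by simp
qed

lemma graph_aut_mem_image_iff:
  assumes "graph_aut V E h" "A \<subseteq> V" "z \<in> V"
  shows "h z \<in> h ` A \<longleftrightarrow> z \<in> A"
proof -
  have "inj_on h V" using assms(1) by (auto simp: graph_aut_def bij_betw_def)
  then show ?thesis using inj_on_image_mem_iff assms(2,3) by metis
qed

locale cube_complex =
  fixes V :: "'v set" and E :: "'v \<Rightarrow> 'v \<Rightarrow> bool"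
  assumes median: "median_graph V E"
begin

abbreviation d where "d \<equiv> gdist E"
abbreviation W where "W \<equiv> halfspace V E"

lemma edge_in_V: "E a b \<Longrightarrow> a \<in> V \<and> b \<in> V"
  using median by (simp add: median_graph_def)

lemma edge_sym: "E a b \<Longrightarrow> E b a"
  using median by (simp add: median_graph_def)

lemma edge_irrefl: "\<not> E a a"
  using median by (simp add: median_graph_def)

lemma median_exists:
  "x \<in> V \<Longrightarrow> y \<in> V \<Longrightarrow> z \<in> V \<Longrightarrow> \<exists>m\<in>V. d x m + d m y = d x y \<and>
     d y m + d m z = d y z \<and> d x m + d m z = d x z"
  using median unfolding median_graph_def by blast

lemma median_unique:
  assumes "x \<in> V" "y \<in> V" "z \<in> V"
    and "m \<in> V" "d x m + d m y = d x y" "d y m + d m z = d y z" "d x m + d m z = d x z"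
    and "m' \<in> V" "d x m' + d m' y = d x y" "d y m' + d m' z = d y z" "d x m' + d m' z = d x z"
  shows "m = m'"
  using median assms unfolding median_graph_def by blast

lemma dist_le_walk: "walk E xs \<Longrightarrow> hd xs = x \<Longrightarrow> last xs = y \<Longrightarrow> d x y \<le> length xs - 1"
  unfolding gdist_def by (rule Least_le) (auto simp: walk_def)

lemma shortest_walk_exists:
  assumes "x \<in> V" "y \<in> V"
  shows "\<exists>xs. walk E xs \<and> hd xs = x \<and> last xs = y \<and> length xs = Suc (d x y)"
proof -
  obtain xs where "walk E xs" "hd xs = x" "last xs = y"
    using median assms unfolding median_graph_def by blast
  then have "\<exists>n xs. walk E xs \<and> hd xs = x \<and> last xs = y \<and> length xs = Suc n"
    by (intro exI[of _ "length xs - 1"] exI[of _ xs]) (auto simp: walk_def)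
  then show ?thesis unfolding gdist_def by (rule LeastI_ex)
qed

lemma walk_in_V: "walk E xs \<Longrightarrow> hd xs \<in> V \<Longrightarrow> set xs \<subseteq> V"
proof (induction xs rule: induct_list012)
  case (3 a b ys)
  then show ?case using edge_in_V by (auto simp: walk_iff_successively)
qed simp_all

lemma dist_refl: "d x x = 0"
  using dist_le_walk[of "[x]" x x] by (simp add: walk_def)

lemma dist_sym: assumes "x \<in> V" "y \<in> V" shows "d x y = d y x"
proof -
  have "d y x \<le> d x y" if xy: "x \<in> V" "y \<in> V" for x y
  proof -
    obtain xs where xs: "walk E xs" "hd xs = x" "last xs = y" "length xs = Suc (d x y)"
      using shortest_walk_exists xy by blast
    have "successively (\<lambda>x y. E y x) xs"
      using xs(1) by (auto simp: walk_iff_successively elim: successively_mono intro: edge_sym)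
    then have "walk E (rev xs)"
      using xs(1) by (simp add: walk_iff_successively)
    moreover have "hd (rev xs) = y" "last (rev xs) = x"
      using xs by (auto simp: hd_rev last_rev walk_def)
    ultimately show ?thesis
      using dist_le_walk[of "rev xs" y x] xs(4) by simp
  qed
  then show ?thesis using assms by (meson antisym)
qed

lemma dist_triangle: assumes "x \<in> V" "y \<in> V" "z \<in> V" shows "d x z \<le> d x y + d y z"
proof -
  obtain xs where xs: "walk E xs" "hd xs = x" "last xs = y" "length xs = Suc (d x y)"
    using shortest_walk_exists assms by blast
  obtain ys where ys: "walk E ys" "hd ys = y" "last ys = z" "length ys = Suc (d y z)"
    using shortest_walk_exists assms by blast
  then obtain t where t: "ys = y # t"
    by (cases ys) (auto simp: walk_def)
  have "walk E (xs @ t)" "hd (xs @ t) = x" "last (xs @ t) = z"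
    using xs ys t by (auto simp: walk_iff_successively successively_append_iff successively_Cons)
  then have "d x z \<le> length (xs @ t) - 1"
    using dist_le_walk by blast
  then show ?thesis using xs ys t by simp
qed

lemma dist_eq_0: assumes "x \<in> V" "y \<in> V" "d x y = 0" shows "x = y"
proof -
  obtain xs where "walk E xs" "hd xs = x" "last xs = y" "length xs = 1"
    using shortest_walk_exists assms by fastforce
  then show ?thesis by (cases xs) auto
qed

lemma dist_eq_1: assumes "x \<in> V" "y \<in> V" "d x y = 1" shows "E x y"
proof -
  obtain xs where xs: "walk E xs" "hd xs = x" "last xs = y" "length xs = Suc (Suc 0)"
    using shortest_walk_exists assms by fastforce
  then obtain u v where "xs = [u, v]"
    by (auto simp: length_Suc_conv)
  then show ?thesis using xs by (simp add: walk_iff_successively)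
qed

lemma dist_edge: assumes "E a b" shows "d a b = 1"
proof -
  have "walk E [a, b]" using assms by (simp add: walk_iff_successively)
  then have "d a b \<le> 1" using dist_le_walk[of "[a, b]" a b] by simp
  moreover have "d a b \<noteq> 0"
    using dist_eq_0 edge_in_V edge_irrefl assms by blast
  ultimately show ?thesis by simp
qed

lemma dist_edge_le: "E a b \<Longrightarrow> z \<in> V \<Longrightarrow> d z a \<le> d z b + 1"
  using dist_triangle[of z b a] dist_edge[of b a] edge_sym edge_in_V by fastforce

lemma dist_Suc_neighbour:
  assumes "x \<in> V" "y \<in> V" "d x y = Suc n"
  shows "\<exists>z. E x z \<and> d z y = n"
proof -
  obtain xs where xs: "walk E xs" "hd xs = x" "last xs = y" "length xs = Suc (Suc n)"
    using shortest_walk_exists[OF assms(1,2)] assms(3) by auto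
  then obtain z zs where xs_eq: "xs = x # z # zs"
    by (auto simp: length_Suc_conv)
  then have xz: "E x z" and "walk E (z # zs)"
    using xs(1) by (simp_all add: walk_iff_successively)
  then have "d z y \<le> n"
    using dist_le_walk[of "z # zs" z y] xs xs_eq by simp
  moreover have "d x y \<le> d x z + d z y"
    using dist_triangle edge_in_V xz assms by blast
  ultimately show ?thesis
    using xz dist_edge assms by (intro exI[of _ z]) auto
qed

lemma dist_neq_across_edge: assumes "E a b" "z \<in> V" shows "d z a \<noteq> d z b"
proof
  assume eq: "d z a = d z b"
  have V: "a \<in> V" "b \<in> V" using edge_in_V assms by auto
  obtain m where m: "m \<in> V" "d z m + d m a = d z a" "d a m + d m b = d a b" "d z m + d m b = d z b"
    using median_exists[OF assms(2) V] by blast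
  then have "d a m = 0 \<or> d m b = 0"
    using dist_edge[OF assms(1)] by linarith
  then have "m = a \<or> m = b"
    using dist_eq_0 V m(1) by metis
  then show False
    using m eq dist_refl dist_edge[OF assms(1)] dist_sym V by auto
qed

section \<open>Halfspaces and hyperplanes\<close>

lemma mem_halfspace: "z \<in> W a b \<longleftrightarrow> z \<in> V \<and> d z a < d z b"
  by (simp add: halfspace_def)

lemma halfspace_subset: "W a b \<subseteq> V"
  by (auto simp: halfspace_def)

lemma halfspace_self: "E a b \<Longrightarrow> a \<in> W a b"
  using edge_in_V dist_refl dist_edge by (simp add: mem_halfspace)

lemma halfspace_compl: assumes "E a b" shows "V - W a b = W b a"
proof -
  have "\<not> d z a < d z b \<longleftrightarrow> d z b < d z a" if "z \<in> V" for z
    using dist_neq_across_edge[OF assms that] by linarith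
  then show ?thesis by (auto simp: mem_halfspace)
qed

lemma square_halfspace_subset:
  assumes e: "E p q" "E p p'" "E q q'" "E p' q'" and diag: "p \<noteq> q'" "q \<noteq> p'"
    and z: "z \<in> W p q"
  shows "z \<in> W p' q'"
proof (rule ccontr)
  assume nz: "z \<notin> W p' q'"
  have V: "p \<in> V" "q \<in> V" "p' \<in> V" "q' \<in> V" using e edge_in_V by auto
  have zV: "z \<in> V" and zpq: "d z p < d z q" using z mem_halfspace by auto
  have zq: "d z q = d z p + 1"
    using dist_edge_le[OF edge_sym[OF e(1)] zV] zpq by linarith
  have "d z q' < d z p'"
    using nz zV dist_neq_across_edge[OF e(4) zV] by (auto simp: mem_halfspace)
  then have zp': "d z p' = d z p + 1" and zq': "d z q' = d z p"
    using dist_edge_le[OF edge_sym[OF e(2)] zV] dist_edge_le[OF e(3) zV] zq by linarith+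
  have d1: "d p q = 1" "d q p = 1" "d p p' = 1" "d p' p = 1"
    "d q q' = 1" "d q' q = 1" "d p' q' = 1" "d q' p' = 1"
    using dist_edge edge_sym e by blast+
  have "d q p' \<le> d q p + d p p'" using dist_triangle V by blast
  moreover have "d q p' \<noteq> 0" using dist_eq_0 V diag by blast
  moreover have "d q p' \<noteq> 1"
    using dist_eq_1[OF V(2,3)] dist_neq_across_edge[OF _ zV, of q p'] zq zp' by auto
  ultimately have qp': "d q p' = 2" using d1 by linarith
  \<comment> \<open>both p and q' are medians of q, p' and z\<close>
  have "p = q'"
    by (rule median_unique[of q p' z p q'])
      (use V zV d1 qp' zq zp' zq' dist_sym[OF V(1) zV] dist_sym[OF V(4) zV]
        dist_sym[OF V(2) zV] dist_sym[OF V(3) zV] in simp_all)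
  then show False using diag by simp
qed

lemma square_halfspace_eq:
  assumes "E p q" "E p p'" "E q q'" "E p' q'" "p \<noteq> q'" "q \<noteq> p'"
  shows "W p q = W p' q'"
  using square_halfspace_subset[OF assms]
    square_halfspace_subset[OF assms(4) edge_sym[OF assms(2)] edge_sym[OF assms(3)] assms(1)]
    assms(5,6) by blast

text \<open>Inductive step of Djokovic's lemma below: a neighbour p' of p closer to a and the median m
  of p', q and b complete a square p q m p' whose edge p'm again crosses from W a b to W b a.\<close>

lemma crossing_edge_step:
  assumes ab: "E a b" and pq: "E p q" and p: "p \<in> W a b" and q: "q \<in> W b a"
    and pa: "d p a = Suc n"
  obtains p' m where "E p p'" "E q m" "E p' m" "p \<noteq> m" "q \<noteq> p'"
    "p' \<in> W a b" "m \<in> W b a" "d p' a = n"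
proof -
  have V: "a \<in> V" "b \<in> V" "p \<in> V" "q \<in> V" using edge_in_V ab pq by auto
  obtain p' where pp': "E p p'" and p'a: "d p' a = n"
    using dist_Suc_neighbour[OF V(3,1) pa] by blast
  have p'V: "p' \<in> V" using edge_in_V pp' by simp
  have d1: "d p q = 1" "d q p = 1" "d p p' = 1" "d p' p = 1"
    using dist_edge edge_sym pq pp' by blast+
  have pb: "d p b = n + 2"
    using p dist_edge_le[OF edge_sym[OF ab] V(3)] pa by (simp add: mem_halfspace)
  have qb: "d q b = n + 1" and qa: "d q a = n + 2"
    using q dist_triangle[OF V(4,3,1)] dist_triangle[OF V(3,4,2)] d1 pa pb
    by (simp_all add: mem_halfspace)
  have p'b: "d p' b = n + 1"
    using dist_edge_le[OF edge_sym[OF ab] p'V] dist_triangle[OF V(3) p'V V(2)] d1 pb p'a by simp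
  obtain m where m: "m \<in> V" "d p' m + d m q = d p' q" "d q m + d m b = d q b"
    "d p' m + d m b = d p' b"
    using median_exists[OF p'V V(4,2)] by blast
  have "d p' q \<le> 2" using dist_triangle[OF p'V V(3,4)] d1 by simp
  have "p' \<noteq> q" using p'a qa by auto
  have eqm: "d p' m = d q m" using m qb p'b by linarith
  have "d p' m \<noteq> 0"
  proof
    assume "d p' m = 0"
    then have "p' = m" "q = m" using dist_eq_0[OF p'V m(1)] dist_eq_0[OF V(4) m(1)] eqm by auto
    then show False using \<open>p' \<noteq> q\<close> by simp
  qed
  then have m1: "d p' m = 1" "d q m = 1"
    using eqm m(2) \<open>d p' q \<le> 2\<close> dist_sym[OF m(1) V(4)] by linarith+
  have mb: "d m b = n" using m m1 p'b by linarith
  have ma: "d m a = n + 1"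
    using dist_triangle[OF V(4) m(1) V(1)] qa m1 dist_edge_le[OF ab m(1)] mb by linarith
  show thesis
  proof
    show "E p' m" "E q m" using dist_eq_1 p'V V(4) m(1) m1 by blast+
    show "p \<noteq> m" using pb mb by auto
    show "q \<noteq> p'" using \<open>p' \<noteq> q\<close> by simp
    show "m \<in> W b a" using m ma mb by (simp add: mem_halfspace)
    show "p' \<in> W a b" using p'V p'a p'b by (simp add: mem_halfspace)
  qed (use pp' p'a in simp_all)
qed

lemma halfspace_crossing_edge:
  assumes "E a b" "E p q" "p \<in> W a b" "q \<in> W b a"
  shows "W p q = W a b"
  using assms
proof (induction "d p a" arbitrary: p q)
  case 0
  have V: "a \<in> V" "b \<in> V" "p \<in> V" "q \<in> V" using edge_in_V 0 by auto
  have "p = a" using 0(1) dist_eq_0[OF V(3,1)] by simp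
  moreover have "d q b = 0"
    using 0(5) \<open>p = a\<close> dist_edge[OF edge_sym[OF 0(3)]] by (simp add: mem_halfspace)
  then have "q = b" using dist_eq_0 V by blast
  ultimately show ?case by simp
next
  case (Suc n)
  obtain p' m where pm: "E p p'" "E q m" "E p' m" "p \<noteq> m" "q \<noteq> p'"
    "p' \<in> W a b" "m \<in> W b a" "d p' a = n"
    using crossing_edge_step[OF Suc.prems] Suc.hyps(2) by metis
  have "W p' m = W a b" using Suc.hyps(1) pm Suc.prems(1) by metis
  then show ?case using square_halfspace_eq[OF Suc.prems(2) pm(1,2,3)] pm(4,5) by simp
qed

definition is_halfspace :: "'v set \<Rightarrow> bool" where
  "is_halfspace A \<longleftrightarrow> (\<exists>a b. E a b \<and> A = W a b)"

definition hyp_of :: "'v set \<Rightarrow> 'v set set" where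
  "hyp_of A = {A, V - A}"

lemma is_halfspace_subset: "is_halfspace A \<Longrightarrow> A \<subseteq> V"
  using halfspace_subset by (auto simp: is_halfspace_def)

lemma is_halfspace_compl: "is_halfspace A \<Longrightarrow> is_halfspace (V - A)"
  unfolding is_halfspace_def using halfspace_compl edge_sym by blast

lemma hyp_of_compl: "A \<subseteq> V \<Longrightarrow> hyp_of (V - A) = hyp_of A"
  by (auto simp: hyp_of_def double_diff)

lemma hyp_of_eqD: "hyp_of A = hyp_of B \<Longrightarrow> B = A \<or> B = V - A"
  by (auto simp: hyp_of_def doubleton_eq_iff)

lemma dual_hyp_eq: "E a b \<Longrightarrow> dual_hyp V E a b = hyp_of (W a b)"
  using halfspace_compl by (simp add: dual_hyp_def hyp_of_def)

lemma hyperplanes_eq: "hyperplanes V E = {hyp_of A | A. is_halfspace A}"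
  unfolding hyperplanes_def is_halfspace_def using dual_hyp_eq by blast

lemma Sep_iff:
  assumes "u \<in> V" "v \<in> V"
  shows "H \<in> Sep V E u v \<longleftrightarrow> (\<exists>A. is_halfspace A \<and> u \<in> A \<and> v \<notin> A \<and> H = hyp_of A)"
proof
  assume "H \<in> Sep V E u v"
  then obtain B A where B: "is_halfspace B" "H = hyp_of B" and A: "A \<in> H" "u \<in> A" "v \<notin> A"
    unfolding Sep_def hyperplanes_eq by blast
  then have "A = B \<or> A = V - B" by (auto simp: hyp_of_def)
  then show "\<exists>A. is_halfspace A \<and> u \<in> A \<and> v \<notin> A \<and> H = hyp_of A"
    using A B is_halfspace_compl hyp_of_compl is_halfspace_subset by metis
next
  assume "\<exists>A. is_halfspace A \<and> u \<in> A \<and> v \<notin> A \<and> H = hyp_of A"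
  then show "H \<in> Sep V E u v"
    unfolding Sep_def hyperplanes_eq by (auto simp: hyp_of_def)
qed

lemma hyp_of_in_Sep_iff:
  assumes Q: "is_halfspace Q" and V: "u \<in> V" "v \<in> V"
  shows "hyp_of Q \<in> Sep V E u v \<longleftrightarrow> (u \<in> Q) \<noteq> (v \<in> Q)"
proof
  assume "hyp_of Q \<in> Sep V E u v"
  then obtain A where A: "u \<in> A" "v \<notin> A" "hyp_of Q = hyp_of A"
    unfolding Sep_iff[OF V] by blast
  have "A = Q \<or> A = V - Q" using A(3) by (rule hyp_of_eqD)
  then show "(u \<in> Q) \<noteq> (v \<in> Q)"
    using A V by blast
next
  assume sep: "(u \<in> Q) \<noteq> (v \<in> Q)"
  show "hyp_of Q \<in> Sep V E u v"
  proof (cases "u \<in> Q")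
    case True
    then show ?thesis unfolding Sep_iff[OF V] using Q sep by blast
  next
    case False
    have "hyp_of Q = hyp_of (V - Q)" "is_halfspace (V - Q)"
      using Q hyp_of_compl is_halfspace_subset is_halfspace_compl by auto
    moreover have "u \<in> V - Q" "v \<notin> V - Q" using False sep V by auto
    ultimately show ?thesis unfolding Sep_iff[OF V] by metis
  qed
qed

lemma halfspace_separating_edge:
  assumes uu': "E u u'" and A: "is_halfspace A" "u \<in> A" "u' \<notin> A"
  shows "A = W u u'"
proof -
  obtain a b where ab: "E a b" "A = W a b" using A(1) is_halfspace_def by blast
  have "u' \<in> V - W a b" using uu' A(3) ab(2) edge_in_V by blast
  then have "u' \<in> W b a" using halfspace_compl[OF ab(1)] by simp
  then show ?thesis using halfspace_crossing_edge[OF ab(1) uu'] A(2) ab(2) by simp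
qed

lemma Sep_step:
  assumes uu': "E u u'" and v: "v \<in> V" and closer: "d v u' < d v u"
  shows "Sep V E u v = insert (hyp_of (W u u')) (Sep V E u' v)"
    and "hyp_of (W u u') \<notin> Sep V E u' v"
proof -
  define Q where "Q = W u u'"
  have V: "u \<in> V" "u' \<in> V" using edge_in_V uu' by auto
  have Q: "is_halfspace Q" using uu' Q_def is_halfspace_def by blast
  have uQ: "u \<in> Q" using halfspace_self uu' Q_def by simp
  have u'Q: "u' \<notin> Q"
    using halfspace_self[OF edge_sym[OF uu']] halfspace_compl[OF uu'] Q_def by blast
  have vQ: "v \<notin> Q" using closer Q_def by (simp add: mem_halfspace)
  have cross: "hyp_of A = hyp_of Q" if A: "is_halfspace A" "(u \<in> A) \<noteq> (u' \<in> A)" for A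
  proof (cases "u \<in> A")
    case True
    then show ?thesis using halfspace_separating_edge[OF uu' A(1)] A(2) Q_def by simp
  next
    case False
    then have "A = V - Q"
      using halfspace_separating_edge[OF edge_sym[OF uu'] A(1)] A(2) halfspace_compl[OF uu'] Q_def
      by simp
    then show ?thesis using hyp_of_compl halfspace_subset Q_def by simp
  qed
  show "hyp_of Q \<notin> Sep V E u' v"
    by (simp add: hyp_of_in_Sep_iff[OF Q V(2) v] u'Q vQ)
  show "Sep V E u v = insert (hyp_of Q) (Sep V E u' v)"
  proof (intro equalityI subsetI)
    fix H assume "H \<in> Sep V E u v"
    then obtain A where A: "is_halfspace A" "u \<in> A" "v \<notin> A" "H = hyp_of A"
      unfolding Sep_iff[OF V(1) v] by blast
    show "H \<in> insert (hyp_of Q) (Sep V E u' v)"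
    proof (cases "u' \<in> A")
      case True
      then show ?thesis using hyp_of_in_Sep_iff[OF A(1) V(2) v] A by simp
    next
      case False
      then show ?thesis using cross[OF A(1)] A by simp
    qed
  next
    fix H assume H: "H \<in> insert (hyp_of Q) (Sep V E u' v)"
    show "H \<in> Sep V E u v"
    proof (cases "H = hyp_of Q")
      case True
      then show ?thesis using hyp_of_in_Sep_iff[OF Q V(1) v] uQ vQ by simp
    next
      case False
      then have "H \<in> Sep V E u' v" using H by simp
      then obtain A where A: "is_halfspace A" "u' \<in> A" "v \<notin> A" "H = hyp_of A"
        unfolding Sep_iff[OF V(2) v] by blast
      then have "u \<in> A" using cross[OF A(1)] False by auto
      then show ?thesis using hyp_of_in_Sep_iff[OF A(1) V(1) v] A by simp
    qed
  qed
qed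

lemma finite_card_Sep:
  assumes "u \<in> V" "v \<in> V"
  shows "finite (Sep V E u v) \<and> card (Sep V E u v) = d u v"
  using assms
proof (induction "d u v" arbitrary: u)
  case 0
  then have "u = v" using dist_eq_0 by simp
  then have "Sep V E u v = {}" by (auto simp: Sep_def)
  then show ?case using 0 by simp
next
  case (Suc n)
  obtain u' where uu': "E u u'" "d u' v = n"
    using dist_Suc_neighbour[OF Suc.prems] Suc.hyps(2) by metis
  have u'V: "u' \<in> V" using edge_in_V uu'(1) by blast
  have "d v u' < d v u"
    using Suc.hyps(2) uu'(2) dist_sym[OF u'V Suc.prems(2)] dist_sym[OF Suc.prems] by simp
  then show ?case
    using Sep_step[OF uu'(1) Suc.prems(2)] Suc.hyps(1)[OF _ u'V Suc.prems(2)] uu'(2) Suc.hyps(2)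
    by simp
qed

lemma finite_Sep: "u \<in> V \<Longrightarrow> v \<in> V \<Longrightarrow> finite (Sep V E u v)"
  using finite_card_Sep by blast

lemma card_Sep: "u \<in> V \<Longrightarrow> v \<in> V \<Longrightarrow> card (Sep V E u v) = d u v"
  using finite_card_Sep by blast

lemma dist_less_if_separated_twice:
  assumes Q: "is_halfspace Q" and V: "u \<in> V" "v \<in> V" "w \<in> V"
    and uv: "(u \<in> Q) \<noteq> (v \<in> Q)" and vw: "(v \<in> Q) \<noteq> (w \<in> Q)"
  shows "d u w < d u v + d v w"
proof -
  let ?S = "Sep V E u v \<union> Sep V E v w"
  have Q_uv: "hyp_of Q \<in> Sep V E u v" using hyp_of_in_Sep_iff[OF Q V(1,2)] uv by simp
  have "Sep V E u w \<subseteq> ?S - {hyp_of Q}"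
  proof
    fix H assume "H \<in> Sep V E u w"
    then obtain A where A: "is_halfspace A" "u \<in> A" "w \<notin> A" "H = hyp_of A"
      unfolding Sep_iff[OF V(1,3)] by blast
    have "H \<noteq> hyp_of Q"
    proof
      assume "H = hyp_of Q"
      then have "A = Q \<or> A = V - Q" using A(4) hyp_of_eqD by metis
      then show False using A(2,3) uv vw V by blast
    qed
    moreover have "H \<in> ?S"
      using hyp_of_in_Sep_iff[OF A(1) V(1,2)] hyp_of_in_Sep_iff[OF A(1) V(2,3)] A by auto
    ultimately show "H \<in> ?S - {hyp_of Q}" by blast
  qed
  moreover have fin: "finite ?S" using finite_Sep V by blast
  ultimately have "card (Sep V E u w) \<le> card (?S - {hyp_of Q})"
    by (simp add: card_mono)
  also have "\<dots> = card ?S - 1" using Q_uv fin by simp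
  also have "\<dots> < card (Sep V E u v) + card (Sep V E v w)"
  proof -
    have "card ?S > 0" using Q_uv fin card_gt_0_iff by blast
    then show ?thesis using card_Un_le[of "Sep V E u v" "Sep V E v w"] by linarith
  qed
  finally show ?thesis using card_Sep V by simp
qed

lemma halfspace_convex:
  assumes A: "is_halfspace A" "u \<in> A" "v \<in> A" and m: "m \<in> V" "d u m + d m v = d u v"
  shows "m \<in> A"
proof (rule ccontr)
  assume "m \<notin> A"
  then have "d u v < d u m + d m v"
    using dist_less_if_separated_twice[OF A(1) _ m(1)] A is_halfspace_subset by blast
  then show False using m(2) by simp
qed

section \<open>Automorphisms and translates of halfspaces\<close>

lemma graph_aut_dist_le:
  assumes h: "graph_aut V E h" and V: "x \<in> V" "y \<in> V"
  shows "d (h x) (h y) \<le> d x y"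
proof -
  obtain xs where xs: "walk E xs" "hd xs = x" "last xs = y" "length xs = Suc (d x y)"
    using shortest_walk_exists V by blast
  have "set xs \<subseteq> V" using walk_in_V xs V by simp
  then have "successively (\<lambda>a b. E (h a) (h b)) xs"
    using xs(1) graph_aut_edge_iff[OF h]
    by (auto simp: walk_iff_successively elim!: successively_mono)
  then have "walk E (map h xs)"
    using xs(1) by (simp add: walk_iff_successively successively_map)
  moreover have "hd (map h xs) = h x" "last (map h xs) = h y"
    using xs by (auto simp: hd_map last_map walk_def)
  ultimately show ?thesis using dist_le_walk[of "map h xs"] xs by fastforce
qed

lemma graph_aut_dist:
  assumes h: "graph_aut V E h" and V: "x \<in> V" "y \<in> V"
  shows "d (h x) (h y) = d x y"
proof -
  let ?h' = "inv_into V h"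
  have "inj_on h V" using h by (simp add: graph_aut_def bij_betw_def)
  then have "?h' (h x) = x" "?h' (h y) = y" using V by simp_all
  then have "d x y \<le> d (h x) (h y)"
    using graph_aut_dist_le[OF graph_aut_inv_into[OF h]] graph_aut_in_V[OF h] V by metis
  then show ?thesis using graph_aut_dist_le[OF h V] by simp
qed

lemma graph_aut_image_halfspace:
  assumes h: "graph_aut V E h" and ab: "a \<in> V" "b \<in> V"
  shows "h ` W a b = W (h a) (h b)"
proof
  show "h ` W a b \<subseteq> W (h a) (h b)"
    using graph_aut_dist[OF h] graph_aut_in_V[OF h] ab by (auto simp: mem_halfspace)
  show "W (h a) (h b) \<subseteq> h ` W a b"
  proof
    fix w assume w: "w \<in> W (h a) (h b)"
    have b: "bij_betw h V V" using h by (simp add: graph_aut_def)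
    then obtain z where z: "z \<in> V" "w = h z"
      using w halfspace_subset bij_betw_imp_surj_on by blast
    then have "z \<in> W a b" using w graph_aut_dist[OF h z(1)] ab by (simp add: mem_halfspace)
    then show "w \<in> h ` W a b" using z by blast
  qed
qed

lemma graph_aut_is_halfspace:
  assumes h: "graph_aut V E h" and A: "is_halfspace A"
  shows "is_halfspace (h ` A)"
proof -
  obtain a b where ab: "E a b" "A = W a b" using A is_halfspace_def by blast
  then have "E (h a) (h b)" using graph_aut_edge_iff[OF h] edge_in_V by blast
  then show ?thesis using graph_aut_image_halfspace[OF h] ab edge_in_V is_halfspace_def by metis
qed

end

locale cube_complex_aut = cube_complex +
  fixes g
  assumes aut: "graph_aut V E g"
begin

abbreviation zp where "zp \<equiv> zpow V g"

lemma zpow_aut: "graph_aut V E (zp n)"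
  unfolding zpow_def
  using graph_aut_funpow[OF aut] graph_aut_funpow[OF graph_aut_inv_into[OF aut]]
  by (cases "0 \<le> n") simp_all

lemma zpow_in_V: "x \<in> V \<Longrightarrow> zp n x \<in> V"
  by (rule graph_aut_in_V[OF zpow_aut])

lemma zpow_0: "zp 0 = id"
  by (simp add: zpow_def)

lemma zpow_1: "zp 1 = g"
  by (simp add: zpow_def)

lemma zpow_succ: assumes x: "x \<in> V" shows "zp (n + 1) x = g (zp n x)"
proof (cases "0 \<le> n")
  case True
  then have "nat (n + 1) = Suc (nat n)" by simp
  then show ?thesis using True by (simp add: zpow_def)
next
  case False
  let ?g' = "inv_into V g"
  define k where "k = nat (- (n + 1))"
  have "nat (- n) = Suc k" using False k_def by simp
  then have "zp n x = ?g' ((?g' ^^ k) x)" using False by (simp add: zpow_def)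
  moreover have "zp (n + 1) x = (?g' ^^ k) x" using False k_def by (simp add: zpow_def)
  moreover have "(?g' ^^ k) x \<in> V"
    using graph_aut_in_V[OF graph_aut_funpow[OF graph_aut_inv_into[OF aut]] x] .
  ultimately show ?thesis
    using aut bij_betw_inv_into_right by (metis graph_aut_def)
qed

lemma zpow_add: "x \<in> V \<Longrightarrow> zp (m + n) x = zp m (zp n x)"
proof (induction m arbitrary: x rule: int_induct[where k = 0])
  case base
  then show ?case by (simp add: zpow_0)
next
  case (step1 i)
  then show ?case using zpow_succ[of x "i + n"] zpow_succ[of "zp n x" i] zpow_in_V
    by (simp add: algebra_simps)
next
  case (step2 i)
  have "zp (i - 1 + n + 1) x = g (zp (i - 1 + n) x)"
    and "zp (i - 1 + 1) (zp n x) = g (zp (i - 1) (zp n x))"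
    using zpow_succ zpow_in_V step2 by blast+
  then have "g (zp (i - 1 + n) x) = g (zp (i - 1) (zp n x))"
    using step2 by (simp add: algebra_simps)
  moreover have "inj_on g V" using aut by (simp add: graph_aut_def bij_betw_def)
  moreover have "zp (i - 1 + n) x \<in> V" "zp (i - 1) (zp n x) \<in> V"
    using zpow_in_V step2.prems by blast+
  ultimately show ?case by (meson inj_onD)
qed

lemma zpow_image_image:
  assumes "A \<subseteq> V"
  shows "zp m ` zp n ` A = zp (m + n) ` A"
proof -
  have "zp m ` zp n ` A = (\<lambda>z. zp m (zp n z)) ` A" by (simp add: image_image)
  also have "\<dots> = zp (m + n) ` A" using zpow_add assms by (intro image_cong) auto
  finally show ?thesis .
qed

lemma zpow_image_0: "zp 0 ` A = A"
  by (simp add: zpow_0)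

lemma zpow_image_diff: "A \<subseteq> V \<Longrightarrow> zp n ` (V - A) = V - zp n ` A"
  using graph_aut_image_diff zpow_aut by blast

lemma zpow_image_subset: "A \<subseteq> V \<Longrightarrow> zp n ` A \<subseteq> V"
  using zpow_in_V by blast

lemma zpow_mem_image_iff:
  assumes A: "A \<subseteq> V" and z: "z \<in> V"
  shows "zp a z \<in> zp b ` A \<longleftrightarrow> z \<in> zp (b - a) ` A"
proof -
  have "zp a z \<in> zp b ` A \<longleftrightarrow> zp a z \<in> zp a ` zp (b - a) ` A"
    using zpow_image_image[OF A, of a "b - a"] by simp
  also have "\<dots> \<longleftrightarrow> z \<in> zp (b - a) ` A"
    using graph_aut_mem_image_iff[OF zpow_aut zpow_image_subset[OF A] z] .
  finally show ?thesis .
qed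

lemma zpow_is_halfspace: "is_halfspace A \<Longrightarrow> is_halfspace (zp n ` A)"
  using graph_aut_is_halfspace zpow_aut by blast

lemma hyp_act_hyp_of:
  "is_halfspace P \<Longrightarrow> hyp_act V g n (hyp_of P) = hyp_of (zp n ` P)"
  using zpow_image_diff is_halfspace_subset by (simp add: hyp_act_def hyp_of_def)

lemma hyp_act_0: "hyp_act V g 0 H = H"
  by (simp add: hyp_act_def zpow_0)

lemma hyp_act_add:
  assumes "H \<in> hyperplanes V E"
  shows "hyp_act V g a (hyp_act V g b H) = hyp_act V g (a + b) H"
proof -
  obtain P where P: "is_halfspace P" "H = hyp_of P" using assms hyperplanes_eq by blast
  then show ?thesis
    using hyp_act_hyp_of zpow_is_halfspace zpow_image_image[OF is_halfspace_subset[OF P(1)]]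
    by simp
qed

lemma Min_set_dist_le: "x \<in> Min_set V E g \<Longrightarrow> y \<in> V \<Longrightarrow> d x (g x) \<le> d y (g y)"
  by (simp add: Min_set_def)

lemma Min_set_subset: "Min_set V E g \<subseteq> V"
  by (auto simp: Min_set_def)

text \<open>If w lay outside P and gP, so would the median y of x, gx and w (by convexity); then gP
  separates y from gx and gx from gy, whence d(y, gy) < d(y, gx) + d(gx, gy) = d(x, gx).\<close>

lemma Min_set_halfspace_cover:
  assumes x: "x \<in> Min_set V E g" and P: "is_halfspace P" "x \<in> P" "g x \<notin> P" "x \<notin> g ` P"
  shows "V \<subseteq> P \<union> g ` P"
proof
  fix w assume w: "w \<in> V"
  show "w \<in> P \<union> g ` P"
  proof (rule ccontr)
    assume "w \<notin> P \<union> g ` P"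
    then have wP: "w \<in> V - P" "w \<in> V - g ` P" using w by auto
    have xV: "x \<in> V" using x Min_set_subset by blast
    have gxV: "g x \<in> V" using graph_aut_in_V[OF aut xV] .
    have PV: "P \<subseteq> V" using P(1) is_halfspace_subset by blast
    have gP: "is_halfspace (g ` P)" using graph_aut_is_halfspace[OF aut P(1)] .
    obtain y where y: "y \<in> V" and e1: "d x y + d y (g x) = d x (g x)"
      and e2: "d (g x) y + d y w = d (g x) w" and e3: "d x y + d y w = d x w"
      using median_exists[OF xV gxV w] by blast
    have gyV: "g y \<in> V" using graph_aut_in_V[OF aut y] .
    have "y \<in> V - g ` P"
      using halfspace_convex[OF is_halfspace_compl[OF gP] _ wP(2) y e3] xV P(4) by blast
    moreover have "y \<in> V - P"
      using halfspace_convex[OF is_halfspace_compl[OF P(1)] _ wP(1) y e2] gxV P(3) by blast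
    then have "g y \<notin> g ` P"
      using graph_aut_mem_image_iff[OF aut PV y] by simp
    ultimately have "d y (g y) < d y (g x) + d (g x) (g y)"
      using dist_less_if_separated_twice[OF gP y gxV gyV] P(2) by blast
    also have "\<dots> = d x (g x)"
      using e1 graph_aut_dist[OF aut xV y] dist_sym[OF xV y] by simp
    finally show False using Min_set_dist_le[OF x y] by simp
  qed
qed

end

locale cospecial_action = cube_complex_aut +
  assumes cospecial: "cospecial V E g"
begin

lemma two_sided: assumes P: "is_halfspace P" shows "zp n ` P \<noteq> V - P"
proof -
  have "\<forall>H\<in>hyperplanes V E. \<forall>n. \<forall>A\<in>H. \<forall>B\<in>H. A \<noteq> B \<longrightarrow> zp n ` A \<noteq> B"
    using cospecial unfolding cospecial_def by (rule conjunct1)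
  moreover have "hyp_of P \<in> hyperplanes V E" using P hyperplanes_eq by blast
  moreover have "P \<noteq> V - P" using P halfspace_self by (auto simp: is_halfspace_def)
  ultimately show ?thesis by (simp add: hyp_of_def)
qed

lemma no_self_crossing:
  assumes P: "is_halfspace P" and ne: "hyp_of (g ` P) \<noteq> hyp_of P"
  shows "\<exists>A\<in>hyp_of P. \<exists>B\<in>hyp_of (g ` P). A \<inter> B = {}"
proof -
  have "\<forall>H\<in>hyperplanes V E. \<forall>n. \<not> hyp_cross H (hyp_act V g n H)"
    using cospecial unfolding cospecial_def by (rule conjunct1[OF conjunct2])
  moreover have "hyp_of P \<in> hyperplanes V E" using P hyperplanes_eq by blast
  ultimately have "\<not> hyp_cross (hyp_of P) (hyp_of (g ` P))"
    using hyp_act_hyp_of[OF P, of 1] zpow_1 by metis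
  then show ?thesis using ne by (auto simp: hyp_cross_def)
qed

text \<open>The complement P' of the preimage of P is again a halfspace containing x but not gx,
  and gP' = V - P; the covering property for P' then forces gP = V - P.\<close>

lemma Min_set_halfspace_not_cover:
  assumes x: "x \<in> Min_set V E g" and P: "is_halfspace P" "x \<in> P" "g x \<notin> P"
    and cover: "V \<subseteq> P \<union> g ` P"
  shows False
proof -
  have xV: "x \<in> V" using x Min_set_subset by blast
  have PV: "P \<subseteq> V" using P(1) is_halfspace_subset by blast
  have mem_pre: "z \<in> zp (- 1) ` P \<longleftrightarrow> g z \<in> P" if "z \<in> V" for z
    using zpow_mem_image_iff[OF PV that, of 1 0] by (simp add: zpow_0 zpow_1)
  define P' where "P' = V - zp (- 1) ` P"
  have P': "is_halfspace P'"
    using P'_def zpow_is_halfspace[OF P(1)] is_halfspace_compl by simp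
  have "g (g x) \<notin> g ` P"
    using graph_aut_mem_image_iff[OF aut PV graph_aut_in_V[OF aut xV]] P(3) by simp
  then have "g (g x) \<in> P" using cover graph_aut_in_V[OF aut] xV by blast
  then have x_P': "x \<in> P'" "g x \<notin> P'"
    using mem_pre xV graph_aut_in_V[OF aut xV] P(3) P'_def by auto
  have gP': "g ` P' = V - P"
    using zpow_image_diff[OF zpow_image_subset[OF PV], of 1] zpow_image_image[OF PV, of 1 "- 1"]
    by (simp add: P'_def zpow_0 zpow_1)
  have "V \<subseteq> P' \<union> (V - P)"
    using Min_set_halfspace_cover[OF x P' x_P'] gP' P(2) by simp
  then have "g ` P \<inter> P = {}"
    using mem_pre PV P'_def graph_aut_in_V[OF aut] by blast
  then have "zp 1 ` P = V - P"
    using cover graph_aut_in_V[OF aut] PV zpow_1 by auto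
  then show False using two_sided[OF P(1)] by blast
qed

lemma Min_set_halfspace_nested:
  assumes x: "x \<in> Min_set V E g" and P: "is_halfspace P" "x \<in> P" "g x \<notin> P"
  shows "P \<subseteq> g ` P"
proof -
  have xV: "x \<in> V" using x Min_set_subset by blast
  have no_cover: "\<not> V \<subseteq> P \<union> g ` P"
    using Min_set_halfspace_not_cover[OF x P] by blast
  then have x_gP: "x \<in> g ` P"
    using Min_set_halfspace_cover[OF x P] by blast
  have "g ` P \<noteq> P" using P(2,3) by blast
  moreover have "g ` P \<noteq> V - P" using two_sided[OF P(1), of 1] zpow_1 by simp
  ultimately have "hyp_of (g ` P) \<noteq> hyp_of P" using hyp_of_eqD[of P "g ` P"] by force
  then obtain A B where AB: "A \<in> {P, V - P}" "B \<in> {g ` P, V - g ` P}" "A \<inter> B = {}"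
    using no_self_crossing[OF P(1)] unfolding hyp_of_def by auto
  have "P \<inter> g ` P \<noteq> {}" "(V - P) \<inter> g ` P \<noteq> {}"
    using x_gP P(2,3) graph_aut_in_V[OF aut xV] by blast+
  then have "P \<inter> (V - g ` P) = {} \<or> (V - P) \<inter> (V - g ` P) = {}"
    using AB by auto
  then show ?thesis using no_cover is_halfspace_subset[OF P(1)] by blast
qed

lemma Min_set_translates_mono:
  assumes x: "x \<in> Min_set V E g" and P: "is_halfspace P" "x \<in> P" "g x \<notin> P"
  shows "mono (\<lambda>k. zp k ` P)"
proof (rule monoI)
  have step: "zp k ` P \<subseteq> zp (k + 1) ` P" for k
  proof -
    have "zp k ` P \<subseteq> zp k ` zp 1 ` P"
      using Min_set_halfspace_nested[OF x P] zpow_1 by (simp add: image_mono)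
    also have "\<dots> = zp (k + 1) ` P"
      using zpow_image_image is_halfspace_subset[OF P(1)] by simp
    finally show ?thesis .
  qed
  fix k l :: int assume "k \<le> l"
  then show "zp k ` P \<subseteq> zp l ` P"
    by (induction l rule: int_ge_induct) (use step in blast)+
qed

lemma Min_set_translate_separates:
  assumes x: "x \<in> Min_set V E g" and P: "is_halfspace P" "x \<in> P" "g x \<notin> P"
    and sep: "(x \<in> zp n ` P) \<noteq> (g x \<in> zp n ` P)"
  shows "n = 0"
proof (rule ccontr)
  assume "n \<noteq> 0"
  have xV: "x \<in> V" using x Min_set_subset by blast
  have mono: "zp k ` P \<subseteq> zp l ` P" if "k \<le> l" for k l
    using monoD[OF Min_set_translates_mono[OF x P] that] .
  have g_iff: "g x \<in> zp m ` P \<longleftrightarrow> x \<in> zp (m - 1) ` P" for m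
    using zpow_mem_image_iff[OF is_halfspace_subset[OF P(1)] xV, of 1 m] zpow_1 by simp
  consider "1 \<le> n" | "n \<le> - 1" using \<open>n \<noteq> 0\<close> by linarith
  then show False
  proof cases
    case 1
    then have "x \<in> zp (n - 1) ` P" "x \<in> zp n ` P"
      using mono[of 0 "n - 1"] mono[of 0 n] P(2) zpow_image_0 by auto
    then show False using sep g_iff by simp
  next
    case 2
    have "x \<notin> zp (- 1) ` P" using g_iff[of 0] P(3) zpow_image_0 by simp
    then have "x \<notin> zp (n - 1) ` P" "x \<notin> zp n ` P"
      using mono[of "n - 1" "- 1"] mono[of n "- 1"] 2 by auto
    then show False using sep g_iff by simp
  qed
qed

lemma Min_set_translates_inj:
  assumes x: "x \<in> Min_set V E g" and P: "is_halfspace P" "x \<in> P" "g x \<notin> P"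
  shows "inj (\<lambda>n. hyp_of (zp n ` P))"
proof (rule injI)
  fix i j assume "hyp_of (zp i ` P) = hyp_of (zp j ` P)"
  then have "zp j ` P = zp i ` P \<or> zp j ` P = V - zp i ` P" by (rule hyp_of_eqD)
  moreover have PV: "P \<subseteq> V" using is_halfspace_subset[OF P(1)] .
  moreover have "zp (- i) ` zp j ` P = zp (j - i) ` P"
    using zpow_image_image[OF PV, of "- i" j] by simp
  moreover have "zp (- i) ` zp i ` P = P"
    using zpow_image_image[OF PV, of "- i" i] zpow_image_0 by simp
  ultimately have "zp (j - i) ` P = P \<or> zp (j - i) ` P = V - P"
    using zpow_image_diff[OF zpow_image_subset[OF PV], of "- i" i] by metis
  then have "(x \<in> zp (j - i) ` P) \<noteq> (g x \<in> zp (j - i) ` P)"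
    using P(2,3) x Min_set_subset graph_aut_in_V[OF aut] by blast
  then have "j - i = 0" by (rule Min_set_translate_separates[OF x P])
  then show "i = j" by simp
qed

lemma Min_set_translate_separating:
  assumes x: "x \<in> Min_set V E g" and P: "is_halfspace P" "x \<in> P" "g x \<notin> P"
    and y: "y \<in> V"
  shows "\<exists>n. y \<in> zp n ` P \<and> g y \<notin> zp n ` P"
proof -
  let ?S = "\<lambda>k. zp k ` P"
  have xV: "x \<in> V" and gxV: "g x \<in> V" using x Min_set_subset graph_aut_in_V[OF aut] by blast+
  have mono: "mono ?S" using Min_set_translates_mono[OF x P] .
  have sep_iff: "hyp_of (?S k) \<in> Sep V E u v \<longleftrightarrow> (u \<in> ?S k) \<noteq> (v \<in> ?S k)"
    if "u \<in> V" "v \<in> V" for u v k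
    using hyp_of_in_Sep_iff[OF zpow_is_halfspace[OF P(1)] that] .
  have finite_sep: "finite {k. hyp_of (?S k) \<in> Sep V E u v}" if "u \<in> V" "v \<in> V" for u v
    using finite_vimageI[OF finite_Sep[OF that] Min_set_translates_inj[OF x P]]
    by (simp add: vimage_def)
  have "\<exists>k. y \<in> ?S k"
  proof (rule ccontr)
    assume "\<nexists>k. y \<in> ?S k"
    then have "{0..} \<subseteq> {k. hyp_of (?S k) \<in> Sep V E x y}"
      using sep_iff[OF xV y] monoD[OF mono] P(2) zpow_image_0 by fastforce
    then show False using finite_sep[OF xV y] infinite_Ici finite_subset by blast
  qed
  moreover have "\<exists>k. y \<notin> ?S k"
  proof (rule ccontr)
    assume "\<nexists>k. y \<notin> ?S k"
    then have "{..0} \<subseteq> {k. hyp_of (?S k) \<in> Sep V E y (g x)}"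
      using sep_iff[OF y gxV] monoD[OF mono] P(3) zpow_image_0 by fastforce
    then show False using finite_sep[OF y gxV] infinite_Iic finite_subset by blast
  qed
  ultimately obtain n where "y \<in> ?S n" "y \<notin> ?S (n - 1)"
    using mono_int_family_boundary[OF mono] by blast
  moreover have "g y \<in> ?S n \<longleftrightarrow> y \<in> ?S (n - 1)"
    using zpow_mem_image_iff[OF is_halfspace_subset[OF P(1)] y, of 1 n] zpow_1 by simp
  ultimately show ?thesis by blast
qed

lemma Sep_Min_set_translate_eq:
  assumes x: "x \<in> Min_set V E g" and H: "H \<in> Sep V E x (g x)"
    and Hn: "hyp_act V g n H \<in> Sep V E x (g x)"
  shows "hyp_act V g n H = H"
proof -
  have xV: "x \<in> V" and gxV: "g x \<in> V" using x Min_set_subset graph_aut_in_V[OF aut] by blast+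
  obtain P where P: "is_halfspace P" "x \<in> P" "g x \<notin> P" and H_eq: "H = hyp_of P"
    using H unfolding Sep_iff[OF xV gxV] by blast
  have "(x \<in> zp n ` P) \<noteq> (g x \<in> zp n ` P)"
    using Hn hyp_of_in_Sep_iff[OF zpow_is_halfspace[OF P(1)] xV gxV] hyp_act_hyp_of[OF P(1)] H_eq
    by simp
  then have "n = 0" using Min_set_translate_separates[OF x P] by blast
  then show ?thesis using hyp_act_0 by simp
qed

lemma Sep_Min_set_translate_exists:
  assumes x: "x \<in> Min_set V E g" and H: "H \<in> Sep V E x (g x)" and y: "y \<in> V"
  shows "\<exists>n. hyp_act V g n H \<in> Sep V E y (g y)"
proof -
  have xV: "x \<in> V" and gxV: "g x \<in> V" using x Min_set_subset graph_aut_in_V[OF aut] by blast+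
  obtain P where P: "is_halfspace P" "x \<in> P" "g x \<notin> P" and H_eq: "H = hyp_of P"
    using H unfolding Sep_iff[OF xV gxV] by blast
  obtain n where "y \<in> zp n ` P" "g y \<notin> zp n ` P"
    using Min_set_translate_separating[OF x P y] by blast
  then have "hyp_act V g n H \<in> Sep V E y (g y)"
    using hyp_of_in_Sep_iff[OF zpow_is_halfspace[OF P(1)] y graph_aut_in_V[OF aut y]]
      hyp_act_hyp_of[OF P(1)] H_eq by simp
  then show ?thesis by blast
qed

end

theorem lemma3p4:
  fixes V :: "'v set" and E :: "'v \<Rightarrow> 'v \<Rightarrow> bool" and g :: "'v \<Rightarrow> 'v"
    and x y :: 'v
  assumes "median_graph V E"
    and "graph_aut V E g"
    and "free_Z_action V g"
    and "cospecial V E g"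
    and "x \<in> Min_set V E g" and "y \<in> Min_set V E g"
  shows "\<exists>!f. f \<in> extensional (Sep V E x (g x)) \<and>
           bij_betw f (Sep V E x (g x)) (Sep V E y (g y)) \<and>
           (\<forall>H\<in>Sep V E x (g x). \<exists>n::int. f H = hyp_act V g n H)"
proof -
  interpret cospecial_action V E g
    by (intro cospecial_action.intro cube_complex_aut.intro cube_complex.intro
        cube_complex_aut_axioms.intro cospecial_action_axioms.intro assms(1,2,4))
  have xV: "x \<in> V" and yV: "y \<in> V" using assms(5,6) Min_set_subset by blast+
  show ?thesis
  proof (rule unique_orbit_bijection[where X = "hyperplanes V E"])
    show "Sep V E x (g x) \<subseteq> hyperplanes V E" "Sep V E y (g y) \<subseteq> hyperplanes V E"
      by (auto simp: Sep_def)
  qed (use hyp_act_0 hyp_act_add Sep_Min_set_translate_eq[OF assms(5)]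
      Sep_Min_set_translate_eq[OF assms(6)] Sep_Min_set_translate_exists[OF assms(5) _ yV]
      Sep_Min_set_translate_exists[OF assms(6) _ xV] in auto)
qed

end
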